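(* Let $K$ be a non-archimedean local field and $G$ a subgroup of $\mathrm{SL}_n(K)$. Suppose either $\mathrm{char}(K)=0$, or $\mathrm{char}(K)=p>0$ and $G$ contains no elements of order $p$. Then $G$ is discrete if and only if every cyclic subgroup of $G$ is discrete.
   Context: A non-archimedean local field is a finite extension of $\mathbb{Q}_p$ or $\mathbb{F}_q((t))$. $\mathrm{SL}_n(K)$ has the subspace topology from $K^{n^2}$. *)

theory Defs
  imports "HOL-Analysis.Analysis"
begin

definition na_abs_value :: "('a::field \<Rightarrow> real) \<Rightarrow> bool" where
  "na_abs_value v \<longleftrightarrow>
     (\<forall>x. 0 \<le> v x) \<and> (\<forall>x. v x = 0 \<longleftrightarrow> x = 0) \<and>
     (\<forall>x y. v (x * y) = v x * v y) \<and>
     (\<forall>x y. v (x + y) \<le> max (v x) (v y))"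

definition abs_topology :: "('a::field \<Rightarrow> real) \<Rightarrow> 'a topology" where
  "abs_topology v = Metric_space.mtopology UNIV (\<lambda>x y. v (x - y))"

text \<open>(K, v) is a non-archimedean local field: a field with a nontrivial
  non-archimedean absolute value whose induced topology is locally compact.
  (Equivalently: a finite extension of Q_p or F_q((t)).)\<close>
definition nonarch_local_field :: "('a::field \<Rightarrow> real) \<Rightarrow> bool" where
  "nonarch_local_field v \<longleftrightarrow>
     na_abs_value v \<and> (\<exists>x. x \<noteq> 0 \<and> v x \<noteq> 1) \<and>
     locally_compact_space (abs_topology v)"

definition mpow :: "'a::field^'n^'n \<Rightarrow> nat \<Rightarrow> 'a^'n^'n" where
  "mpow g k = (((**) g) ^^ k) (mat 1)"

definition mpow_int :: "'a::field^'n^'n \<Rightarrow> int \<Rightarrow> 'a^'n^'n" where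
  "mpow_int g k = (if 0 \<le> k then mpow g (nat k) else mpow (matrix_inv g) (nat (- k)))"

definition SL :: "('a::field^'n^'n) set" where
  "SL = {A. det A = 1}"

definition is_subgroup_SL :: "('a::field^'n^'n) set \<Rightarrow> bool" where
  "is_subgroup_SL G \<longleftrightarrow> G \<subseteq> SL \<and> mat 1 \<in> G \<and>
     (\<forall>a\<in>G. \<forall>b\<in>G. a ** b \<in> G) \<and> (\<forall>a\<in>G. matrix_inv a \<in> G)"

definition cyclic_subgroup :: "'a::field^'n^'n \<Rightarrow> ('a^'n^'n) set" where
  "cyclic_subgroup g = range (mpow_int g)"

definition has_order :: "'a::field^'n^'n \<Rightarrow> nat \<Rightarrow> bool" where
  "has_order g m \<longleftrightarrow> 0 < m \<and> mpow g m = mat 1 \<and> (\<forall>k. 0 < k \<and> k < m \<longrightarrow> mpow g k \<noteq> mat 1)"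

text \<open>A set S of matrices is discrete in the subspace topology inherited from
  K^(n*n) (product of the v-topology): every point of S is isolated, i.e. has a
  basic product neighbourhood (all entries within eps) meeting S only in itself.\<close>
definition discrete_set :: "('a::field \<Rightarrow> real) \<Rightarrow> ('a^'n^'n) set \<Rightarrow> bool" where
  "discrete_set v S \<longleftrightarrow>
     (\<forall>g\<in>S. \<exists>e>0. \<forall>h\<in>S. (\<forall>i j. v (h$i$j - g$i$j) < e) \<longrightarrow> h = g)"

end

theory Submission
  imports Defs
begin

(* If G is not discrete, it contains elements x \<noteq> 1 arbitrarily close to 1. Pick a positive
   integer n with |n| < 1: in characteristic p take n = p; in characteristic 0 such an n exists,
   since otherwise the multiples of a small y would be pairwise at distance |y| inside a compact
   ball. The entrywise expansion (1 + Y)^n = 1 + nY + O(|Y|^2) makes |x^(n^m) - 1| decay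
   geometrically, so discreteness of the cyclic group generated by x forces x^(n^m) = 1 for some
   m, which yields k \<noteq> 1 close to 1 with k^n = 1. In characteristic p this k has order p. In
   characteristic 0 the same expansion, read at an entry of Y = k - 1 of maximal absolute value,
   gives |n| |Y| \<le> |Y|^2, impossible when |Y| < |n|. *)

lemma matrix_add_rdistrib: "(B + C) ** A = B ** A + C ** (A::'a::semiring_1^'n^'m)"
  by (vector matrix_matrix_mult_def sum.distrib[symmetric] field_simps)

lemma matrix_diff_ldistrib: "A ** (B - C) = A ** B - A ** (C::'a::ring_1^'n^'m)"
  by (vector matrix_matrix_mult_def sum_subtractf[symmetric] field_simps)

lemma matrix_inv_inverse:
  assumes "invertible A"
  shows "matrix_inv A ** A = mat 1" "A ** matrix_inv A = mat 1"
proof -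
  have "A ** matrix_inv A = mat 1 \<and> matrix_inv A ** A = mat 1"
    using assms unfolding invertible_def matrix_inv_def by (rule someI_ex)
  then show "matrix_inv A ** A = mat 1" "A ** matrix_inv A = mat 1"
    by simp_all
qed

lemma mpow_0 [simp]: "mpow g 0 = mat 1"
  by (simp add: mpow_def)

lemma mpow_Suc: "mpow g (Suc k) = g ** mpow g k"
  by (simp add: mpow_def)

lemma mpow_1 [simp]: "mpow g 1 = g"
  by (simp add: mpow_Suc)

lemma mpow_add: "mpow g (a + b) = mpow g a ** mpow g b"
  by (induction a) (simp_all add: mpow_Suc matrix_mul_assoc)

lemma mpow_mult: "mpow g (a * b) = mpow (mpow g a) b"
  by (induction b) (simp_all add: mpow_Suc mpow_add)

lemma mpow_mat1 [simp]: "mpow (mat 1) a = (mat 1 :: 'a::field^'n^'n)"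
  by (induction a) (simp_all add: mpow_Suc)

lemma mpow_in_subgroup: "is_subgroup_SL G \<Longrightarrow> g \<in> G \<Longrightarrow> mpow g k \<in> G"
  by (induction k) (auto simp: mpow_Suc is_subgroup_SL_def)

lemma cyclic_subgroup_subset: "is_subgroup_SL G \<Longrightarrow> g \<in> G \<Longrightarrow> cyclic_subgroup g \<subseteq> G"
  unfolding cyclic_subgroup_def mpow_int_def
  by (auto simp: mpow_in_subgroup is_subgroup_SL_def)

lemma mpow_in_cyclic_subgroup: "mpow g k \<in> cyclic_subgroup g"
  unfolding cyclic_subgroup_def by (metis mpow_int_def nat_int of_nat_0_le_iff rangeI)

lemma discrete_set_subset: "discrete_set v T \<Longrightarrow> S \<subseteq> T \<Longrightarrow> discrete_set v S"
  unfolding discrete_set_def by (meson subsetD)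

lemma ex_mpow_pow_nontrivial_root:
  assumes "mpow x (n ^ m) = mat 1" "x \<noteq> mat 1"
  shows "\<exists>j. mpow x (n ^ j) \<noteq> mat 1 \<and> mpow (mpow x (n ^ j)) n = mat 1"
  using assms(1)
proof (induction m)
  case (Suc m)
  then show ?case
    by (metis mpow_mult power_Suc2)
qed (use assms(2) in \<open>simp add: mpow_Suc\<close>)

lemma has_order_prime:
  assumes p: "prime p" and kp: "mpow k p = mat 1" and k: "k \<noteq> mat 1"
  shows "has_order k p"
  unfolding has_order_def
proof (intro conjI allI impI)
  show "0 < p"
    using p prime_gt_0_nat by blast
  fix j
  assume j: "0 < j \<and> j < p"
  show "mpow k j \<noteq> mat 1"
  proof
    assume kj: "mpow k j = mat 1"
    have "coprime j p"
      using p j by (metis coprime_commute nat_dvd_not_less prime_imp_coprime)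
    then obtain x y where xy: "j * x = p * y + 1"
      using bezout_nat[of j p] j by auto
    have "mpow k (j * x) = mat 1"
      by (simp add: mpow_mult kj)
    moreover have "mpow k (p * y + 1) = k"
      by (simp only: mpow_add mpow_mult kp mpow_mat1 mpow_1 matrix_mul_lid)
    ultimately show False
      using xy k by simp
  qed
qed (use kp in simp)

definition entrywise_bounded :: "('a::field \<Rightarrow> real) \<Rightarrow> 'a^'m^'k \<Rightarrow> real \<Rightarrow> bool" where
  "entrywise_bounded v X r \<longleftrightarrow> (\<forall>i j. v (X$i$j) \<le> r)"

lemma entrywise_bounded_mono:
  "entrywise_bounded v X r \<Longrightarrow> r \<le> r' \<Longrightarrow> entrywise_bounded v X r'"
  unfolding entrywise_bounded_def by (meson order_trans)

lemma ex_entrywise_bounded_by_entry: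
  fixes X :: "'a::field^'m^'k"
  shows "\<exists>a b. entrywise_bounded v X (v (X$a$b))"
proof -
  define f where "f p = v (X $ fst p $ snd p)" for p
  have fin: "finite (range f)"
    by simp
  have "Max (range f) \<in> range f"
    using Max_in[OF fin] by simp
  then obtain q where q: "f q = Max (range f)"
    by (metis rangeE)
  have "f p \<le> f q" for p
    unfolding q using Max_ge[OF fin] by simp
  then show ?thesis
    unfolding entrywise_bounded_def f_def by (metis fst_conv snd_conv)
qed

locale na_absval =
  fixes v :: "'a::field \<Rightarrow> real"
  assumes na_abs_value: "na_abs_value v"
begin

lemma v_nonneg [simp]: "0 \<le> v x"
  using na_abs_value unfolding na_abs_value_def by blast

lemma v_eq_0_iff [simp]: "v x = 0 \<longleftrightarrow> x = 0"
  using na_abs_value unfolding na_abs_value_def by blast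

lemma v_mult: "v (x * y) = v x * v y"
  using na_abs_value unfolding na_abs_value_def by blast

lemma v_add_le_max: "v (x + y) \<le> max (v x) (v y)"
  using na_abs_value unfolding na_abs_value_def by blast

lemma v_zero [simp]: "v 0 = 0"
  by simp

lemma v_pos_iff: "0 < v x \<longleftrightarrow> x \<noteq> 0"
  using v_nonneg[of x] v_eq_0_iff[of x] by linarith

lemma v_one [simp]: "v 1 = 1"
proof -
  have "v 1 * v 1 = v 1 * 1"
    using v_mult[of 1 1] by simp
  then show ?thesis
    using v_eq_0_iff[of 1] by (simp del: v_eq_0_iff)
qed

lemma v_minus [simp]: "v (- x) = v x"
proof -
  have "v (- 1) * v (- 1) = 1"
    using v_mult[of "- 1" "- 1"] by simp
  then have "(v (- 1) - 1) * (v (- 1) + 1) = 0"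
    by (simp add: algebra_simps)
  then have "v (- 1) = 1"
    using v_nonneg[of "- 1"] by (auto simp del: v_nonneg)
  then show ?thesis
    using v_mult[of "- 1" x] by simp
qed

lemma v_inverse: "v (inverse x) = inverse (v x)"
proof (cases "x = 0")
  case False
  then have "v x * v (inverse x) = 1"
    using v_mult[of x "inverse x"] by simp
  then show ?thesis
    by (simp add: inverse_unique)
qed simp

lemma v_diff_commute: "v (x - y) = v (y - x)"
  using v_minus[of "x - y"] by simp

lemma v_power: "v (x ^ m) = v x ^ m"
  by (induction m) (simp_all add: v_mult)

lemma v_of_nat_le_one: "v (of_nat n) \<le> 1"
proof (induction n)
  case (Suc n)
  then show ?case
    using v_add_le_max[of 1 "of_nat n"] by simp
qed simp

lemma v_sum_le:
  assumes "0 \<le> c" "\<And>i. i \<in> S \<Longrightarrow> v (f i) \<le> c"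
  shows "v (sum f S) \<le> c"
  using assms(2)
proof (induction S rule: infinite_finite_induct)
  case (insert x F)
  then have "v (f x) \<le> c" "v (sum f F) \<le> c"
    by simp_all
  then show ?case
    using v_add_le_max[of "f x" "sum f F"] insert(1,2) by simp
qed (use assms(1) in simp_all)

sublocale ms: Metric_space UNIV "\<lambda>x y. v (x - y)"
proof
  fix x y z :: 'a
  show "0 \<le> v (x - y)" "v (x - y) = v (y - x)" "v (x - y) = 0 \<longleftrightarrow> x = y"
    by (simp_all add: v_diff_commute)
  have "v (x - z) \<le> max (v (x - y)) (v (y - z))"
    using v_add_le_max[of "x - y" "y - z"] by simp
  then show "v (x - z) \<le> v (x - y) + v (y - z)"
    using v_nonneg[of "x - y"] v_nonneg[of "y - z"] by linarith
qed

lemma entrywise_bounded_nonneg: "entrywise_bounded v X r \<Longrightarrow> 0 \<le> r"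
  unfolding entrywise_bounded_def by (meson order_trans v_nonneg)

lemma entrywise_bounded_add:
  assumes "entrywise_bounded v X r" "entrywise_bounded v Y r"
  shows "entrywise_bounded v (X + Y) r"
  using assms unfolding entrywise_bounded_def by (auto intro: order_trans[OF v_add_le_max])

lemma entrywise_bounded_mult:
  assumes X: "entrywise_bounded v (X::'a^'m^'k) r" and Y: "entrywise_bounded v (Y::'a^'p^'m) s"
  shows "entrywise_bounded v (X ** Y) (r * s)"
  unfolding entrywise_bounded_def matrix_matrix_mult_def
proof (intro allI)
  fix i j
  have "v (X$i$k * Y$k$j) \<le> r * s" for k
    using X Y entrywise_bounded_nonneg[OF X] unfolding entrywise_bounded_def v_mult
    by (simp add: mult_mono)
  then show "v ((\<chi> i j. \<Sum>k\<in>UNIV. X$i$k * Y$k$j) $ i $ j) \<le> r * s"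
    using entrywise_bounded_nonneg[OF X] entrywise_bounded_nonneg[OF Y] by (simp add: v_sum_le)
qed

lemma ex_entrywise_bounded: "\<exists>M>0. entrywise_bounded v X M"
proof -
  obtain a b where "entrywise_bounded v X (v (X$a$b))"
    using ex_entrywise_bounded_by_entry by blast
  then have "entrywise_bounded v X (v (X$a$b) + 1)"
    by (rule entrywise_bounded_mono) simp
  then show ?thesis
    by (metis add_nonneg_pos v_nonneg zero_less_one)
qed

lemma mpow_one_plus_expansion:
  assumes Y: "entrywise_bounded v Y s" and s: "s \<le> 1"
  shows "\<exists>R. entrywise_bounded v R (s * s) \<and>
    (\<forall>a b. (mpow (mat 1 + Y) i - mat 1)$a$b = of_nat i * Y$a$b + R$a$b)"
proof (induction i)
  case 0
  have "0 \<le> s * s"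
    by simp
  then show ?case
    by (intro exI[of _ 0]) (simp add: entrywise_bounded_def)
next
  case (Suc i)
  then obtain R where R: "entrywise_bounded v R (s * s)"
    and P_eq: "\<And>a b. (mpow (mat 1 + Y) i - mat 1)$a$b = of_nat i * Y$a$b + R$a$b"
    by blast
  define P where "P = mpow (mat 1 + Y) i - mat 1"
  have s_sq: "s * s \<le> s"
    using s entrywise_bounded_nonneg[OF Y] by (simp add: mult_left_le)
  have iY: "v (of_nat i * Y$a$b) \<le> s" for a b
  proof -
    have "v (of_nat i * Y$a$b) = v (of_nat i) * v (Y$a$b)"
      by (rule v_mult)
    also have "\<dots> \<le> 1 * s"
      using Y v_of_nat_le_one unfolding entrywise_bounded_def by (intro mult_mono) auto
    finally show ?thesis
      by simp
  qed
  have P: "entrywise_bounded v P s"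
    using iY R s_sq unfolding entrywise_bounded_def P_def P_eq
    by (meson max.bounded_iff order_trans v_add_le_max)
  have "mpow (mat 1 + Y) i = P + mat 1"
    by (simp add: P_def)
  then have "mpow (mat 1 + Y) (Suc i) - mat 1 = P + Y + Y ** P"
    by (simp add: mpow_Suc matrix_add_rdistrib matrix_add_ldistrib)
  then have "(mpow (mat 1 + Y) (Suc i) - mat 1)$a$b = of_nat (Suc i) * Y$a$b + (R + Y ** P)$a$b"
    for a b
    using P_eq[of a b, folded P_def] by (simp add: algebra_simps)
  moreover have "entrywise_bounded v (R + Y ** P) (s * s)"
    using R entrywise_bounded_mult[OF Y P] by (rule entrywise_bounded_add)
  ultimately show ?case
    by blast
qed

lemma mpow_minus_one_bound:
  assumes k: "entrywise_bounded v (k - mat 1) s" and s: "s \<le> 1"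
  shows "entrywise_bounded v (mpow k i - mat 1) (max (v (of_nat i) * s) (s * s))"
proof -
  define Y where "Y = k - mat 1"
  have "k = mat 1 + Y"
    by (simp add: Y_def)
  then obtain R where R: "entrywise_bounded v R (s * s)"
    and eq: "\<And>a b. (mpow k i - mat 1)$a$b = of_nat i * Y$a$b + R$a$b"
    using mpow_one_plus_expansion[OF k[folded Y_def] s, of i] by auto
  have "v (of_nat i * Y$a$b) \<le> v (of_nat i) * s" for a b
    using k unfolding Y_def[symmetric] entrywise_bounded_def v_mult by (simp add: mult_left_mono)
  then show ?thesis
    using R unfolding entrywise_bounded_def eq
    by (meson max.mono order_trans v_add_le_max)
qed

lemma mpow_pow_minus_one_bound:
  assumes h: "entrywise_bounded v (h - mat 1) r" and r: "r < 1"
  shows "entrywise_bounded v (mpow h (n ^ m) - mat 1) (max (v (of_nat n)) r ^ m * r)"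
proof (induction m)
  case 0
  then show ?case
    using h by (simp add: mpow_Suc)
next
  case (Suc m)
  define t where "t = max (v (of_nat n)) r"
  have "0 \<le> r"
    using entrywise_bounded_nonneg[OF h] .
  then have t: "0 \<le> t" "t \<le> 1" "r \<le> t" "v (of_nat n) \<le> t"
    unfolding t_def using r v_of_nat_le_one by auto
  define s where "s = t ^ m * r"
  have "t ^ m * r \<le> r"
    using t \<open>0 \<le> r\<close> by (simp add: mult_left_le_one_le power_le_one)
  then have s: "0 \<le> s" "s \<le> t"
    unfolding s_def using t \<open>0 \<le> r\<close> by simp_all
  have "entrywise_bounded v (mpow (mpow h (n ^ m)) n - mat 1) (max (v (of_nat n) * s) (s * s))"
    using Suc s(2) t(2) unfolding s_def t_def by (intro mpow_minus_one_bound) auto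
  moreover have "max (v (of_nat n) * s) (s * s) \<le> t * s"
    using t s by (simp add: mult_right_mono)
  moreover have "t * s = t ^ Suc m * r"
    by (simp add: s_def mult.assoc)
  ultimately show ?case
    unfolding t_def by (simp only: power_Suc2 mpow_mult) (rule entrywise_bounded_mono)
qed

lemma torsion_not_near_one:
  assumes kn: "mpow k n = mat 1" and k: "entrywise_bounded v (k - mat 1) s"
    and s: "s < v (of_nat n)"
  shows "k = mat 1"
proof (rule ccontr)
  assume "k \<noteq> mat 1"
  define Y where "Y = k - mat 1"
  obtain a b where Y_ab: "entrywise_bounded v Y (v (Y$a$b))"
    using ex_entrywise_bounded_by_entry by blast
  have "Y \<noteq> 0"
    using \<open>k \<noteq> mat 1\<close> by (simp add: Y_def)
  then obtain i j where "Y$i$j \<noteq> 0"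
    by (metis vec_eq_iff zero_index)
  then have pos: "0 < v (Y$a$b)"
    using Y_ab unfolding entrywise_bounded_def by (metis order_less_le_trans v_pos_iff)
  have le_s: "v (Y$a$b) \<le> s"
    using k unfolding Y_def entrywise_bounded_def by blast
  obtain R where R: "entrywise_bounded v R (v (Y$a$b) * v (Y$a$b))"
    and eq: "(mpow k n - mat 1)$a$b = of_nat n * Y$a$b + R$a$b"
    using mpow_one_plus_expansion[OF Y_ab, of n] le_s s v_of_nat_le_one[of n]
    by (fastforce simp: Y_def)
  have "R$a$b = - (of_nat n * Y$a$b)"
    using eq kn by (simp add: eq_neg_iff_add_eq_0 add.commute)
  then have "v (of_nat n) * v (Y$a$b) \<le> v (Y$a$b) * v (Y$a$b)"
    using R unfolding entrywise_bounded_def by (metis v_minus v_mult)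
  moreover have "v (Y$a$b) * v (Y$a$b) < v (of_nat n) * v (Y$a$b)"
    using pos le_s s by simp
  ultimately show False
    by linarith
qed

lemma ex_small_nonzero:
  assumes "\<exists>x. x \<noteq> 0 \<and> v x \<noteq> 1" and e: "0 < e"
  shows "\<exists>y. y \<noteq> 0 \<and> v y < e"
proof -
  obtain x where x: "x \<noteq> 0" "v x \<noteq> 1"
    using assms(1) by blast
  obtain z where z: "z \<noteq> 0" "v z < 1"
  proof (cases "v x < 1")
    case False
    then have "v (inverse x) < 1"
      using x by (simp add: v_inverse inverse_less_1_iff)
    then show ?thesis
      using that[of "inverse x"] x(1) by simp
  qed (use that x in blast)
  obtain m where "v z ^ m < e"
    using real_arch_pow_inv[OF e z(2)] by blast
  then have "z ^ m \<noteq> 0 \<and> v (z ^ m) < e"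
    using z(1) by (simp add: v_power)
  then show ?thesis
    by blast
qed

lemma ex_totally_bounded_ball:
  assumes "locally_compact_space ms.mtopology"
  shows "\<exists>\<epsilon>>0. ms.mtotally_bounded (ms.mball 0 \<epsilon>)"
proof -
  have "0 \<in> topspace ms.mtopology"
    by simp
  then obtain U K where U: "openin ms.mtopology U" "0 \<in> U" and K: "compactin ms.mtopology K" "U \<subseteq> K"
    using assms unfolding locally_compact_space_def by blast
  obtain \<epsilon> where "\<epsilon> > 0" "ms.mball 0 \<epsilon> \<subseteq> U"
    using U ms.openin_mtopology by blast
  moreover have "ms.mtotally_bounded K"
    using K(1) by (rule ms.compactin_imp_mtotally_bounded)
  ultimately show ?thesis
    using K(2) ms.mtotally_bounded_subset by (meson order_trans)
qed

lemma ex_of_nat_less_one: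
  assumes "nonarch_local_field v"
  shows "\<exists>n\<ge>1. v (of_nat n) < 1"
proof (rule ccontr)
  assume "\<not> (\<exists>n\<ge>1. v (of_nat n) < 1)"
  then have v_nat: "v (of_nat n) = 1" if "n \<ge> 1" for n
    using that v_of_nat_le_one[of n] by force
  obtain \<epsilon> where "\<epsilon> > 0" and bounded: "ms.mtotally_bounded (ms.mball 0 \<epsilon>)"
    using assms ex_totally_bounded_ball
    unfolding nonarch_local_field_def abs_topology_def by blast
  then obtain y where y: "y \<noteq> 0" "v y < \<epsilon>"
    using assms ex_small_nonzero unfolding nonarch_local_field_def by blast
  define \<sigma> where "\<sigma> k = of_nat k * y" for k :: nat
  have "v (of_nat k * y) \<le> v y" for k :: nat
    using mult_left_le_one_le[of "v y" "v (of_nat k)"] v_of_nat_le_one by (simp add: v_mult)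
  then have "v (of_nat k * y) < \<epsilon>" for k :: nat
    using y(2) order_le_less_trans by blast
  then have "range \<sigma> \<subseteq> ms.mball 0 \<epsilon>"
    by (auto simp: \<sigma>_def)
  then obtain r where r: "strict_mono r" and "ms.MCauchy (\<sigma> \<circ> r)"
    using bounded ms.mtotally_bounded_sequentially by blast
  then obtain N where N: "v (\<sigma> (r (Suc N)) - \<sigma> (r N)) < v y"
    using y(1) unfolding ms.MCauchy_def by (metis comp_apply le_Suc_eq order.refl v_pos_iff)
  have "r N < r (Suc N)"
    using r by (simp add: strict_monoD)
  then have "\<sigma> (r (Suc N)) - \<sigma> (r N) = of_nat (r (Suc N) - r N) * y"
    by (simp add: \<sigma>_def of_nat_diff left_diff_distrib)
  moreover have "v (of_nat (r (Suc N) - r N)) = 1"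
    using \<open>r N < r (Suc N)\<close> by (intro v_nat) simp
  ultimately show False
    using N by (simp add: v_mult)
qed

lemma not_discrete_subgroup_near_one:
  assumes G: "is_subgroup_SL G" and nd: "\<not> discrete_set v G" and r: "0 < r"
  shows "\<exists>x\<in>G. x \<noteq> mat 1 \<and> entrywise_bounded v (x - mat 1) r"
proof -
  obtain g where g: "g \<in> G"
    and acc: "\<And>e. e > 0 \<Longrightarrow> \<exists>h\<in>G. (\<forall>i j. v (h$i$j - g$i$j) < e) \<and> h \<noteq> g"
    using nd unfolding discrete_set_def by blast
  define gi where "gi = matrix_inv g"
  have "invertible g"
    using G g by (auto simp: is_subgroup_SL_def SL_def invertible_det_nz)
  then have gi: "gi ** g = mat 1" "g ** gi = mat 1" "gi \<in> G"
    using G g matrix_inv_inverse unfolding gi_def is_subgroup_SL_def by auto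
  obtain M where M: "M > 0" "entrywise_bounded v gi M"
    using ex_entrywise_bounded by blast
  obtain h where h: "h \<in> G" "h \<noteq> g" and close: "\<forall>i j. v (h$i$j - g$i$j) < r / M"
    using acc[of "r / M"] M r by auto
  define x where "x = gi ** h"
  have x_minus: "x - mat 1 = gi ** (h - g)"
    by (simp add: x_def matrix_diff_ldistrib gi)
  have "x \<in> G"
    using G gi h unfolding x_def is_subgroup_SL_def by blast
  moreover have "x \<noteq> mat 1"
  proof
    assume "x = mat 1"
    then have "g ** (x - mat 1) = 0"
      by simp
    then show False
      using h(2) by (simp add: x_minus matrix_mul_assoc gi)
  qed
  moreover have "entrywise_bounded v (h - g) (r / M)"
    using close by (simp add: entrywise_bounded_def less_imp_le)
  then have "entrywise_bounded v (gi ** (h - g)) (M * (r / M))"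
    by (rule entrywise_bounded_mult[OF M(2)])
  then have "entrywise_bounded v (x - mat 1) r"
    using M(1) by (simp add: x_minus)
  ultimately show ?thesis
    by blast
qed

lemma discrete_cyclic_mpow_pow_eq_one:
  assumes disc: "discrete_set v (cyclic_subgroup x)" and x: "entrywise_bounded v (x - mat 1) r"
    and r: "r < 1" and n: "v (of_nat n) < 1"
  shows "\<exists>m. mpow x (n ^ m) = mat 1"
proof -
  obtain e where e: "e > 0"
    and iso: "\<And>h. h \<in> cyclic_subgroup x \<Longrightarrow> \<forall>i j. v (h$i$j - mat 1$i$j) < e \<Longrightarrow> h = mat 1"
    using disc mpow_in_cyclic_subgroup[of x 0] unfolding discrete_set_def by fastforce
  define t where "t = max (v (of_nat n)) r"
  have t: "0 \<le> t" "t < 1"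
    using n r unfolding t_def by (auto simp: le_max_iff_disj)
  obtain m where "t ^ m < e"
    using real_arch_pow_inv[OF e t(2)] by blast
  moreover have "t ^ m * r \<le> t ^ m"
    using t r entrywise_bounded_nonneg[OF x] by (simp add: mult_left_le)
  ultimately have "entrywise_bounded v (mpow x (n ^ m) - mat 1) (t ^ m)"
    using mpow_pow_minus_one_bound[OF x r, of n m] unfolding t_def
    by (auto intro: entrywise_bounded_mono)
  then have "mpow x (n ^ m) = mat 1"
    using \<open>t ^ m < e\<close> unfolding entrywise_bounded_def
    by (intro iso mpow_in_cyclic_subgroup) (fastforce intro: order_le_less_trans)
  then show ?thesis ..
qed

lemma torsion_near_one:
  assumes G: "is_subgroup_SL G" and cyc: "\<forall>g\<in>G. discrete_set v (cyclic_subgroup g)"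
    and nd: "\<not> discrete_set v G" and n: "v (of_nat n) < 1" and r: "0 < r" "r < 1"
  shows "\<exists>k\<in>G. k \<noteq> mat 1 \<and> mpow k n = mat 1 \<and> entrywise_bounded v (k - mat 1) r"
proof -
  obtain x where x: "x \<in> G" "x \<noteq> mat 1" "entrywise_bounded v (x - mat 1) r"
    using not_discrete_subgroup_near_one[OF G nd r(1)] by blast
  obtain m where "mpow x (n ^ m) = mat 1"
    using discrete_cyclic_mpow_pow_eq_one[OF _ x(3) r(2) n] cyc x(1) by blast
  then obtain j where j: "mpow x (n ^ j) \<noteq> mat 1" "mpow (mpow x (n ^ j)) n = mat 1"
    using ex_mpow_pow_nontrivial_root x(2) by blast
  have "max (v (of_nat n)) r ^ j * r \<le> r"
    using n r by (simp add: mult_left_le_one_le power_le_one)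
  then have "entrywise_bounded v (mpow x (n ^ j) - mat 1) r"
    using mpow_pow_minus_one_bound[OF x(3) r(2)] entrywise_bounded_mono by blast
  then show ?thesis
    using j mpow_in_subgroup[OF G x(1)] by blast
qed

end

theorem proposition1p4:
  fixes v :: "'a::field \<Rightarrow> real"
    and G :: "('a^'n^'n) set"
  assumes "nonarch_local_field v"
    and "is_subgroup_SL G"
    and "CHAR('a) = 0 \<or> (CHAR('a) > 0 \<and> \<not> (\<exists>g\<in>G. has_order g CHAR('a)))"
  shows "discrete_set v G \<longleftrightarrow> (\<forall>g\<in>G. discrete_set v (cyclic_subgroup g))"
proof
  show "\<forall>g\<in>G. discrete_set v (cyclic_subgroup g)" if "discrete_set v G"
    using that assms(2) cyclic_subgroup_subset discrete_set_subset by blast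
next
  assume cyc: "\<forall>g\<in>G. discrete_set v (cyclic_subgroup g)"
  interpret na_absval v
    using assms(1) by unfold_locales (simp add: nonarch_local_field_def)
  show "discrete_set v G"
  proof (rule ccontr)
    assume nd: "\<not> discrete_set v G"
    show False
    proof (cases "CHAR('a) = 0")
      case True
      obtain n where "n \<ge> 1" "v (of_nat n) < 1"
        using ex_of_nat_less_one[OF assms(1)] by blast
      moreover from this True have "0 < v (of_nat n)"
        by (simp add: v_pos_iff of_nat_eq_0_iff_char_dvd)
      ultimately obtain k where "k \<in> G" "k \<noteq> mat 1" "mpow k n = mat 1"
          "entrywise_bounded v (k - mat 1) (v (of_nat n) / 2)"
        using torsion_near_one[OF assms(2) cyc nd, of n "v (of_nat n) / 2"] by auto
      then show False
        using torsion_not_near_one \<open>0 < v (of_nat n)\<close> by fastforce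
    next
      case False
      then obtain k where "k \<in> G" "k \<noteq> mat 1" "mpow k CHAR('a) = mat 1"
        using torsion_near_one[OF assms(2) cyc nd, of "CHAR('a)" "1 / 2"] by auto
      then have "has_order k CHAR('a)"
        using False by (simp add: has_order_prime prime_CHAR_semidom)
      then show False
        using assms(3) False \<open>k \<in> G\<close> by blast
    qed
  qed
qed

end
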